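(* Let $G$ be the graph defined in the context. For every pair $\{x,y\}$ of distinct vertices of $G$ that are not adjacent in $G$, the graph obtained from $G$ by adding the edge $xy$ contains an induced subgraph isomorphic to $P_6$.
   Context: $P_n$ denotes the path on $n$ vertices. Let $\mathbb{F}=\mathbb{F}_2[\alpha]/(\alpha^4+\alpha+1)$ be the field with 16 elements. Let $S=\{x^3: x\in\mathbb{F}^\times\}=\{1,\alpha^3,\alpha^2+\alpha^3,\alpha+\alpha^3,1+\alpha+\alpha^2+\alpha^3\}$ be the set of nonzero cubes. Let $G$ be the graph with vertex set $\mathbb{F}$ in which distinct $x,y$ are adjacent if and only if $x-y\in S$. *)

theory Defs
  imports "HOL-Library.Z2" "HOL-Computational_Algebra.Polynomial"
begin

text \<open>The field F_16 = F_2[alpha]/(alpha^4+alpha+1), realised as the set of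
  polynomials over F_2 of degree < 4 (reduced representatives), with
  multiplication taken modulo the modulus; addition/subtraction are those of
  polynomials (no reduction needed).\<close>

definition f16_modulus :: "bit poly" where
  "f16_modulus = [:1, 1, 0, 0, 1:]"

definition F16 :: "bit poly set" where
  "F16 = {p. degree p < 4}"

definition f16_mult :: "bit poly \<Rightarrow> bit poly \<Rightarrow> bit poly" where
  "f16_mult p q = (p * q) mod f16_modulus"

definition f16_cubes :: "bit poly set" where
  "f16_cubes = {f16_mult (f16_mult x x) x | x. x \<in> F16 \<and> x \<noteq> 0}"

definition G_adj :: "bit poly \<Rightarrow> bit poly \<Rightarrow> bool" where
  "G_adj x y \<longleftrightarrow> x \<noteq> y \<and> x - y \<in> f16_cubes"

definition add_edge :: "('a \<Rightarrow> 'a \<Rightarrow> bool) \<Rightarrow> 'a \<Rightarrow> 'a \<Rightarrow> 'a \<Rightarrow> 'a \<Rightarrow> bool" where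
  "add_edge E a b u v \<longleftrightarrow> E u v \<or> (u = a \<and> v = b) \<or> (u = b \<and> v = a)"

definition has_induced_path :: "'a set \<Rightarrow> ('a \<Rightarrow> 'a \<Rightarrow> bool) \<Rightarrow> nat \<Rightarrow> bool" where
  "has_induced_path V E n \<longleftrightarrow>
     (\<exists>f. inj_on f {..<n} \<and> f ` {..<n} \<subseteq> V \<and>
          (\<forall>i<n. \<forall>j<n. E (f i) (f j) \<longleftrightarrow> (i = j + 1 \<or> j = i + 1)))"

end

theory Submission
  imports Defs
begin

text \<open>Adjacency in G depends only on the difference of the endpoints, so the translation
  \<open>u \<mapsto> u + x\<close> is an automorphism of G carrying the non-edge \<open>{0, y - x}\<close> to \<open>{x, y}\<close>.
  It therefore suffices to add an edge \<open>{0, d}\<close>, where d ranges over the ten nonzero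
  non-cubes; for each of them an induced P6 containing the new edge is exhibited explicitly
  and checked by evaluation.\<close>

lemma has_induced_path_image:
  assumes path: "has_induced_path V E n"
    and inj: "inj_on h V" and into: "h ` V \<subseteq> W"
    and preserves: "\<And>u v. u \<in> V \<Longrightarrow> v \<in> V \<Longrightarrow> E' (h u) (h v) \<longleftrightarrow> E u v"
  shows "has_induced_path W E' n"
proof -
  obtain f where f: "inj_on f {..<n}" "f ` {..<n} \<subseteq> V"
    and adj: "\<forall>i<n. \<forall>j<n. E (f i) (f j) \<longleftrightarrow> i = j + 1 \<or> j = i + 1"
    using path unfolding has_induced_path_def by blast
  have "inj_on (h \<circ> f) {..<n}"
    using f inj by (simp add: comp_inj_on inj_on_subset)
  moreover have "(h \<circ> f) ` {..<n} \<subseteq> W"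
    using f(2) into by (auto simp: image_comp[symmetric])
  moreover have "\<forall>i<n. \<forall>j<n. E' ((h \<circ> f) i) ((h \<circ> f) j) \<longleftrightarrow> i = j + 1 \<or> j = i + 1"
  proof (intro allI impI)
    fix i j assume "i < n" "j < n"
    then have "f i \<in> V" "f j \<in> V" using f(2) by auto
    then show "E' ((h \<circ> f) i) ((h \<circ> f) j) \<longleftrightarrow> i = j + 1 \<or> j = i + 1"
      using adj preserves \<open>i < n\<close> \<open>j < n\<close> by simp
  qed
  ultimately show ?thesis
    unfolding has_induced_path_def by blast
qed

lemma add_edge_translate:
  fixes E :: "'a::ab_group_add \<Rightarrow> 'a \<Rightarrow> bool"
  assumes "\<And>u v. E (u + x) (v + x) \<longleftrightarrow> E u v"
  shows "add_edge E x y (u + x) (v + x) \<longleftrightarrow> add_edge E 0 (y - x) u v"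
  using assms unfolding add_edge_def by (auto simp: algebra_simps)

definition induced_path_list :: "('a \<Rightarrow> 'a \<Rightarrow> bool) \<Rightarrow> 'a list \<Rightarrow> bool" where
  "induced_path_list E l \<longleftrightarrow> distinct l \<and>
     list_all (\<lambda>i. list_all (\<lambda>j. E (l ! i) (l ! j) \<longleftrightarrow> i = j + 1 \<or> j = i + 1)
       [0..<length l]) [0..<length l]"

lemma has_induced_path_list:
  assumes "induced_path_list E l" and "set l \<subseteq> V"
  shows "has_induced_path V E (length l)"
  unfolding has_induced_path_def
proof (intro exI[of _ "nth l"] conjI)
  show "inj_on (nth l) {..<length l}"
    using assms(1) by (simp add: induced_path_list_def inj_on_def nth_eq_iff_index_eq)
  show "nth l ` {..<length l} \<subseteq> V"
    using assms(2) by auto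
  show "\<forall>i<length l. \<forall>j<length l. E (l ! i) (l ! j) \<longleftrightarrow> i = j + 1 \<or> j = i + 1"
    using assms(1) by (simp add: induced_path_list_def list_all_iff)
qed

lemma F16_add: "p \<in> F16 \<Longrightarrow> q \<in> F16 \<Longrightarrow> p + q \<in> F16"
  unfolding F16_def using degree_add_le_max[of p q] by auto

lemma F16_diff: "p \<in> F16 \<Longrightarrow> q \<in> F16 \<Longrightarrow> p - q \<in> F16"
  unfolding F16_def using degree_diff_le_max[of p q] by auto

lemma G_adj_translate: "G_adj (u + x) (v + x) \<longleftrightarrow> G_adj u v"
  by (simp add: G_adj_def)

lemma poly_degree_less_4:
  assumes "degree p < 4"
  shows "p = [:coeff p 0, coeff p 1, coeff p 2, coeff p 3:]"
proof (rule poly_eqI)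
  fix n
  show "coeff p n = coeff [:coeff p 0, coeff p 1, coeff p 2, coeff p 3:] n"
    using assms
    by (cases n; cases "n - 1"; cases "n - 2"; cases "n - 3")
       (auto simp: coeff_pCons coeff_eq_0 numeral_2_eq_2 numeral_3_eq_3 split: nat.splits)
qed

definition F16_list :: "bit poly list" where
  "F16_list = [[:a, b, c, d:]. a \<leftarrow> [0, 1], b \<leftarrow> [0, 1], c \<leftarrow> [0, 1], d \<leftarrow> [0, 1]]"

lemma F16_list_complete: "[:a, b, c, d:] \<in> set F16_list"
  by (cases a; cases b; cases c; cases d) (simp_all add: F16_list_def)

lemma F16_eq_set_list: "F16 = set F16_list"
proof
  show "F16 \<subseteq> set F16_list"
  proof
    fix p assume "p \<in> F16"
    then have "p = [:coeff p 0, coeff p 1, coeff p 2, coeff p 3:]"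
      by (intro poly_degree_less_4) (simp add: F16_def)
    then show "p \<in> set F16_list"
      by (metis F16_list_complete)
  qed
  show "set F16_list \<subseteq> F16"
    by (auto simp: F16_list_def F16_def)
qed

lemma f16_cubes_eq:
  "f16_cubes = {[:1:], [:0, 0, 0, 1:], [:0, 0, 1, 1:], [:0, 1, 0, 1:], [:1, 1, 1, 1:]}"
proof -
  have "f16_cubes = (\<lambda>x. f16_mult (f16_mult x x) x) ` (set F16_list - {0})"
    unfolding f16_cubes_def F16_eq_set_list by auto
  also have "\<dots> = {[:1:], [:0, 0, 0, 1:], [:0, 0, 1, 1:], [:0, 1, 0, 1:], [:1, 1, 1, 1:]}"
    unfolding f16_mult_def f16_modulus_def F16_list_def by code_simp
  finally show ?thesis .
qed

definition P6_certificate :: "(bit poly \<times> bit poly list) list" where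
  "P6_certificate =
    [([:0,1:], [0, [:0,1:], [:1,1:], [:1,0,0,1:], [:1,0,1:], [:0,0,1:]]),
     ([:1,1:], [0, [:1,1:], [:0,1:], [:1,0,1,1:], [:1,0,1:], [:0,0,1:]]),
     ([:0,0,1:], [0, [:0,0,1:], [:1,0,1:], [:1,0,0,1:], [:1,1:], [:0,1:]]),
     ([:1,0,1:], [0, [:1,0,1:], [:0,0,1:], [:1,1,0,1:], [:1,1:], [:0,1:]]),
     ([:0,1,1:], [0, [:0,1,1:], [:1,1,1:], [:1,1,0,1:], [:1,1:], [:0,1:]]),
     ([:1,1,1:], [0, [:1,1,1:], [:0,1,1:], [:1,0,0,1:], [:1,1:], [:0,1:]]),
     ([:1,0,0,1:], [0, [:1,0,0,1:], [:1,1:], [:0,1:], [:1,0,1,1:], [:1,1,1:]]),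
     ([:1,1,0,1:], [0, [:1,1,0,1:], [:1,1:], [:0,1:], [:1,0,1,1:], [:1,0,1:]]),
     ([:1,0,1,1:], [0, [:1,0,1,1:], [:0,1:], [:1,1:], [:1,0,0,1:], [:0,1,1:]]),
     ([:0,1,1,1:], [0, [:0,1,1,1:], [:0,1:], [:1,1:], [:1,0,0,1:], [:1,0,1:]])]"

lemma P6_certificate_covers_non_neighbours:
  assumes "d \<in> F16" "d \<noteq> 0" "\<not> G_adj 0 d"
  shows "d \<in> fst ` set P6_certificate"
proof -
  have "list_all (\<lambda>d. d \<noteq> 0 \<and> \<not> G_adj 0 d \<longrightarrow> d \<in> fst ` set P6_certificate) F16_list"
    unfolding G_adj_def f16_cubes_eq F16_list_def P6_certificate_def by code_simp
  then show ?thesis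
    using assms by (simp add: F16_eq_set_list list_all_iff)
qed

lemma P6_certificate_valid:
  assumes "(d, l) \<in> set P6_certificate"
  shows "length l = 6" "set l \<subseteq> F16" "induced_path_list (add_edge G_adj 0 d) l"
proof -
  have "list_all (\<lambda>(d, l). length l = 6 \<and> list_all (\<lambda>v. degree v < 4) l \<and>
          induced_path_list (add_edge G_adj 0 d) l) P6_certificate"
    unfolding G_adj_def add_edge_def f16_cubes_eq induced_path_list_def P6_certificate_def
    by code_simp
  then show "length l = 6" "set l \<subseteq> F16" "induced_path_list (add_edge G_adj 0 d) l"
    using assms by (auto simp: list_all_iff F16_def)
qed

theorem claim2:
  shows "\<forall>x\<in>F16. \<forall>y\<in>F16. x \<noteq> y \<and> \<not> G_adj x y \<longrightarrow>
           has_induced_path F16 (add_edge G_adj x y) 6"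
proof (intro ballI impI)
  fix x y assume x: "x \<in> F16" and y: "y \<in> F16" and non_edge: "x \<noteq> y \<and> \<not> G_adj x y"
  define d where "d = y - x"
  have "d \<in> F16" "d \<noteq> 0" "\<not> G_adj 0 d"
    using F16_diff[OF y x] non_edge G_adj_translate[of 0 x d] by (auto simp: d_def)
  then obtain l where "(d, l) \<in> set P6_certificate"
    using P6_certificate_covers_non_neighbours by force
  then have "has_induced_path F16 (add_edge G_adj 0 d) 6"
    using P6_certificate_valid has_induced_path_list by metis
  then show "has_induced_path F16 (add_edge G_adj x y) 6"
  proof (rule has_induced_path_image)
    show "inj_on (\<lambda>u. u + x) F16" by (simp add: inj_on_def)
    show "(\<lambda>u. u + x) ` F16 \<subseteq> F16" using F16_add x by auto
    show "add_edge G_adj x y (u + x) (v + x) \<longleftrightarrow> add_edge G_adj 0 d u v" for u v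
      unfolding d_def by (rule add_edge_translate) (rule G_adj_translate)
  qed
qed

end
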